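(* Let $\mathcal M$ be a convex tetrahedral mesh, and let $p_s$ be a point in the interior of a tetrahedron $t_s$ of $\mathcal M$, such that no edge of $\mathcal M$ has endpoints collinear with $p_s$ and no face of $\mathcal M$ has its three vertices coplanar with $p_s$. Then for every element $k$ (vertex, edge or face) of the skeleton of $\mathcal M$ there is exactly one tetrahedron $t$ of $\mathcal M$ having $k$ on its boundary such that $k$ is invisible from $p_s$ with respect to $t$.
   Context: The skeleton of $\mathcal M$ consists of its vertices, edges and faces. An element $k$ of a tetrahedron $t$ is invisible from $p_s$ with respect to $t$ if for some point $x$ of $k$ (in the relative interior of $k$ if $k$ is an edge or face) the segment from $p_s$ to $x$ intersects the interior of $t$. *)

theory Defs
  imports "HOL-Analysis.Analysis"
begin

type_synonym point = "real ^ 3"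

definition is_tetrahedron :: "point set \<Rightarrow> bool" where
  "is_tetrahedron t \<longleftrightarrow> card t = 4 \<and> \<not> affine_dependent t"

text \<open>A tetrahedral mesh: a finite set of tetrahedra meeting face-to-face
  (any two solid tetrahedra intersect exactly in the convex hull of their
  common vertices, i.e. in a common face, edge, vertex, or not at all).\<close>
definition tet_mesh :: "point set set \<Rightarrow> bool" where
  "tet_mesh M \<longleftrightarrow> finite M \<and> (\<forall>t\<in>M. is_tetrahedron t) \<and>
     (\<forall>t1\<in>M. \<forall>t2\<in>M. convex hull t1 \<inter> convex hull t2 = convex hull (t1 \<inter> t2))"

definition convex_tet_mesh :: "point set set \<Rightarrow> bool" where
  "convex_tet_mesh M \<longleftrightarrow> tet_mesh M \<and> convex (\<Union>t\<in>M. convex hull t)"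

text \<open>Elements of a tetrahedron: its vertices, edges and faces (as vertex sets).\<close>
definition elements_of :: "point set \<Rightarrow> point set set" where
  "elements_of t = {k. k \<subseteq> t \<and> 1 \<le> card k \<and> card k \<le> 3}"

definition skeleton :: "point set set \<Rightarrow> point set set" where
  "skeleton M = (\<Union>t\<in>M. elements_of t)"

definition edges_of_mesh :: "point set set \<Rightarrow> point set set" where
  "edges_of_mesh M = {k \<in> skeleton M. card k = 2}"

definition faces_of_mesh :: "point set set \<Rightarrow> point set set" where
  "faces_of_mesh M = {k \<in> skeleton M. card k = 3}"

text \<open>Element k of tetrahedron t is invisible from p w.r.t. t if for some point x
  of the relative interior of k (for a vertex: the vertex itself) the segment
  from p to x meets the interior of t.\<close>
definition invisible :: "point \<Rightarrow> point set \<Rightarrow> point set \<Rightarrow> bool" where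
  "invisible p k t \<longleftrightarrow>
     (\<exists>x\<in>rel_interior (convex hull k). closed_segment p x \<inter> interior (convex hull t) \<noteq> {})"

end

theory Submission
  imports Defs
begin

text \<open>
  A tetrahedron t is a full-dimensional simplex, so every point p has unique
  barycentric coordinates with respect to t. If x lies in the relative interior of an
  element k of t, then x has positive coordinates on k and zero coordinates on t - k.
  Moving from x towards p changes the coordinates affinely, hence the segment from p to
  x meets the interior of t exactly when p has positive coordinates on all vertices of
  t - k; this characterises invisibility and shows it is independent of the choice of x.

  Uniqueness: if k were invisible with respect to two tetrahedra, points of the segment
  close to x would lie in both interiors; in a face-to-face mesh this forces the two
  tetrahedra to coincide. Existence: points y on the segment close to x lie in the
  (convex) mesh, hence in some tetrahedron t; since only finitely many closed cells are
  involved, t must contain x and therefore k. The coordinates of y on t - k are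
  nonnegative, so those of p are too, and the genericity hypothesis (p is never coplanar
  with a face) rules out zero coordinates.
\<close>

section \<open>Barycentric coordinates in a full-dimensional simplex\<close>

definition full_simplex :: "'a::euclidean_space set \<Rightarrow> bool" where
  "full_simplex t \<longleftrightarrow> \<not> affine_dependent t \<and> affine hull t = UNIV"

lemma full_simplex_finite: "full_simplex t \<Longrightarrow> finite t"
  unfolding full_simplex_def by (simp add: aff_independent_finite)

lemma full_simplex_card:
  fixes t :: "'a::euclidean_space set"
  assumes "full_simplex t"
  shows "card t = DIM('a) + 1"
proof -
  have "of_nat (card t) = aff_dim t + 1" "aff_dim t = DIM('a)"
    using assms aff_dim_affine_independent aff_dim_eq_full unfolding full_simplex_def by auto
  then show ?thesis by linarith
qed

lemma tetrahedron_full_simplex: "is_tetrahedron t \<Longrightarrow> full_simplex t"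
proof -
  assume tet: "is_tetrahedron t"
  then have indep: "\<not> affine_dependent t" and "card t = 4" unfolding is_tetrahedron_def by auto
  then have "aff_dim t = DIM(point)" using aff_dim_affine_independent[OF indep] by simp
  then show ?thesis using indep aff_dim_eq_full unfolding full_simplex_def by blast
qed

definition bary :: "'a::real_vector set \<Rightarrow> 'a \<Rightarrow> 'a \<Rightarrow> real" where
  "bary t p = (SOME u. sum u t = 1 \<and> (\<Sum>v\<in>t. u v *\<^sub>R v) = p)"

lemma bary_combination:
  assumes "full_simplex t"
  shows "sum (bary t p) t = 1" and "(\<Sum>v\<in>t. bary t p v *\<^sub>R v) = p"
proof -
  have "p \<in> affine hull t" using assms unfolding full_simplex_def by simp
  then have "\<exists>u. sum u t = 1 \<and> (\<Sum>v\<in>t. u v *\<^sub>R v) = p"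
    using affine_hull_finite[OF full_simplex_finite[OF assms]] by auto
  then have "sum (bary t p) t = 1 \<and> (\<Sum>v\<in>t. bary t p v *\<^sub>R v) = p"
    unfolding bary_def by (rule someI_ex)
  then show "sum (bary t p) t = 1" and "(\<Sum>v\<in>t. bary t p v *\<^sub>R v) = p" by auto
qed

lemma bary_unique:
  assumes "full_simplex t" "sum u t = 1" "(\<Sum>v\<in>t. u v *\<^sub>R v) = p" "w \<in> t"
  shows "bary t p w = u w"
proof (rule ccontr)
  assume ne: "bary t p w \<noteq> u w"
  let ?d = "\<lambda>v. u v - bary t p v"
  have "sum ?d t = 0" "(\<Sum>v\<in>t. ?d v *\<^sub>R v) = 0"
    using bary_combination[OF assms(1), of p] assms(2,3)
    by (simp_all add: sum_subtractf scaleR_diff_left)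
  moreover have "\<exists>v\<in>t. ?d v \<noteq> 0" using ne assms(4) by (intro bexI[of _ w]) simp_all
  ultimately have "affine_dependent t"
    using affine_dependent_explicit_finite[OF full_simplex_finite[OF assms(1)]] by blast
  then show False using assms(1) unfolding full_simplex_def by simp
qed

lemma bary_affine:
  assumes "full_simplex t" "w \<in> t"
  shows "bary t ((1 - s) *\<^sub>R x + s *\<^sub>R p) w = (1 - s) * bary t x w + s * bary t p w"
proof (rule bary_unique[OF assms(1) _ _ assms(2)])
  note x = bary_combination[OF assms(1), of x] and p = bary_combination[OF assms(1), of p]
  show "(\<Sum>v\<in>t. (1 - s) * bary t x v + s * bary t p v) = 1"
    using x p by (simp add: sum.distrib flip: sum_distrib_left)
  show "(\<Sum>v\<in>t. ((1 - s) * bary t x v + s * bary t p v) *\<^sub>R v) = (1 - s) *\<^sub>R x + s *\<^sub>R p"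
    using x p by (simp add: scaleR_add_left sum.distrib flip: scaleR_sum_right scaleR_scaleR)
qed

lemma bary_of_subset_combination:
  assumes "full_simplex t" "S \<subseteq> t" "sum u S = 1" "(\<Sum>v\<in>S. u v *\<^sub>R v) = x"
  shows "\<forall>w\<in>S. bary t x w = u w" and "\<forall>w\<in>t - S. bary t x w = 0"
proof -
  let ?u = "\<lambda>v. if v \<in> S then u v else 0"
  have fin: "finite t" using full_simplex_finite[OF assms(1)] .
  have "sum ?u t = 1"
    using sum.mono_neutral_right[OF fin assms(2), of ?u] assms(3) by auto
  moreover have "(\<Sum>v\<in>t. ?u v *\<^sub>R v) = x"
    using sum.mono_neutral_right[OF fin assms(2), of "\<lambda>v. ?u v *\<^sub>R v"] assms(4) by auto
  ultimately have "\<forall>w\<in>t. bary t x w = ?u w" using bary_unique[OF assms(1)] by blast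
  then show "\<forall>w\<in>S. bary t x w = u w" and "\<forall>w\<in>t - S. bary t x w = 0" using assms(2) by auto
qed

lemma interior_iff_bary_pos:
  assumes "full_simplex t"
  shows "y \<in> interior (convex hull t) \<longleftrightarrow> (\<forall>w\<in>t. bary t y w > 0)"
proof
  have "interior (convex hull t) =
      {y. \<exists>u. (\<forall>v\<in>t. 0 < u v) \<and> sum u t = 1 \<and> (\<Sum>v\<in>t. u v *\<^sub>R v) = y}"
    using interior_convex_hull_explicit_minimal[of t] assms full_simplex_card[OF assms]
    unfolding full_simplex_def by simp
  note interior = this
  show "y \<in> interior (convex hull t) \<Longrightarrow> \<forall>w\<in>t. bary t y w > 0"
    unfolding interior using bary_unique[OF assms] by auto
  show "\<forall>w\<in>t. bary t y w > 0 \<Longrightarrow> y \<in> interior (convex hull t)"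
    unfolding interior using bary_combination[OF assms, of y] by blast
qed

lemma convex_hull_iff_bary_nonneg:
  assumes "full_simplex t"
  shows "y \<in> convex hull t \<longleftrightarrow> (\<forall>w\<in>t. bary t y w \<ge> 0)"
proof
  note hull = convex_hull_finite[OF full_simplex_finite[OF assms]]
  show "y \<in> convex hull t \<Longrightarrow> \<forall>w\<in>t. bary t y w \<ge> 0"
    unfolding hull using bary_unique[OF assms] by auto
  show "\<forall>w\<in>t. bary t y w \<ge> 0 \<Longrightarrow> y \<in> convex hull t"
    unfolding hull using bary_combination[OF assms, of y] by blast
qed

lemma rel_interior_element_bary:
  assumes "full_simplex t" "k \<subseteq> t" "x \<in> rel_interior (convex hull k)"
  shows "\<forall>w\<in>k. bary t x w > 0" and "\<forall>w\<in>t - k. bary t x w = 0"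
proof -
  have "\<not> affine_dependent k"
    using assms(1,2) affine_dependent_subset unfolding full_simplex_def by blast
  then obtain u where "\<forall>v\<in>k. 0 < u v" "sum u k = 1" "(\<Sum>v\<in>k. u v *\<^sub>R v) = x"
    using rel_interior_convex_hull_explicit assms(3) by blast
  then show "\<forall>w\<in>k. bary t x w > 0" and "\<forall>w\<in>t - k. bary t x w = 0"
    using bary_of_subset_combination[OF assms(1,2)] by auto
qed

lemma rel_interior_element_in_hull_subset:
  assumes "full_simplex t" "k \<subseteq> t" "x \<in> rel_interior (convex hull k)"
    and "S \<subseteq> t" "x \<in> convex hull S"
  shows "k \<subseteq> S"
proof
  fix w assume "w \<in> k"
  then have pos: "bary t x w > 0" using rel_interior_element_bary(1)[OF assms(1-3)] by blast
  obtain u where "sum u S = 1" "(\<Sum>v\<in>S. u v *\<^sub>R v) = x"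
    using assms(5) convex_hull_finite finite_subset[OF assms(4) full_simplex_finite[OF assms(1)]]
    by blast
  then have "\<forall>v\<in>t - S. bary t x v = 0" using bary_of_subset_combination[OF assms(1,4)] by blast
  then show "w \<in> S" using pos \<open>w \<in> k\<close> assms(2) by (metis DiffI less_irrefl subsetD)
qed

lemma bary_zero_imp_affine_hull_facet:
  assumes "full_simplex t" "w \<in> t" "bary t p w = 0"
  shows "p \<in> affine hull (t - {w})"
proof -
  have fin: "finite t" using full_simplex_finite[OF assms(1)] .
  have "sum (bary t p) (t - {w}) = 1" "(\<Sum>v\<in>t - {w}. bary t p v *\<^sub>R v) = p"
    using bary_combination[OF assms(1), of p] assms(3)
      sum.remove[OF fin assms(2), of "bary t p"] sum.remove[OF fin assms(2), of "\<lambda>v. bary t p v *\<^sub>R v"]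
    by simp_all
  then show ?thesis using affine_hull_finite[of "t - {w}"] fin by auto
qed

section \<open>Segments towards a point and invisibility\<close>

lemma segment_meets_interior_imp_bary_pos:
  assumes "full_simplex t" "k \<subseteq> t" "x \<in> rel_interior (convex hull k)"
    and "closed_segment p x \<inter> interior (convex hull t) \<noteq> {}"
  shows "\<forall>w\<in>t - k. bary t p w > 0"
proof
  fix w assume w: "w \<in> t - k"
  obtain u where u: "0 \<le> u" "u \<le> 1" "(1 - u) *\<^sub>R p + u *\<^sub>R x \<in> interior (convex hull t)"
    using assms(4) unfolding closed_segment_def by auto
  then have "(1 - u) * bary t p w + u * bary t x w > 0"
    using interior_iff_bary_pos[OF assms(1)] bary_affine[OF assms(1), of w u p x] w by auto
  moreover have "bary t x w = 0" using rel_interior_element_bary(2)[OF assms(1-3)] w by blast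
  ultimately show "bary t p w > 0" using u(2) by (simp add: zero_less_mult_iff)
qed

lemma eventually_segment_in_interior:
  assumes "full_simplex t" "k \<subseteq> t" "x \<in> rel_interior (convex hull k)"
    and "\<forall>w\<in>t - k. bary t p w > 0"
  shows "\<forall>\<^sub>F s in at_right 0. (1 - s) *\<^sub>R x + s *\<^sub>R p \<in> interior (convex hull t)"
proof -
  have coord_pos: "\<forall>\<^sub>F s in at_right 0. (1 - s) * bary t x w + s * bary t p w > 0"
    if w: "w \<in> t" for w
  proof (cases "w \<in> k")
    case True
    have "((\<lambda>s. (1 - s) * bary t x w + s * bary t p w) \<longlongrightarrow> (1 - 0) * bary t x w + 0 * bary t p w)
        (at_right 0)"
      by (intro tendsto_intros)
    then have "((\<lambda>s. (1 - s) * bary t x w + s * bary t p w) \<longlongrightarrow> bary t x w) (at_right 0)"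
      by simp
    moreover have "bary t x w > 0" using rel_interior_element_bary(1)[OF assms(1-3)] True by blast
    ultimately show ?thesis by (rule order_tendstoD(1))
  next
    case False
    then have "bary t x w = 0" "bary t p w > 0"
      using rel_interior_element_bary(2)[OF assms(1-3)] assms(4) w by auto
    then show ?thesis
      by (intro eventually_mono[OF eventually_at_right_less[of "0::real"]]) simp
  qed
  have "\<forall>w\<in>t. \<forall>\<^sub>F s in at_right 0. (1 - s) * bary t x w + s * bary t p w > 0"
    using coord_pos by blast
  then have "\<forall>\<^sub>F s in at_right 0. \<forall>w\<in>t. (1 - s) * bary t x w + s * bary t p w > 0"
    by (rule eventually_ball_finite[OF full_simplex_finite[OF assms(1)]])
  then show ?thesis
  proof (rule eventually_mono)
    fix s assume "\<forall>w\<in>t. (1 - s) * bary t x w + s * bary t p w > 0"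
    then show "(1 - s) *\<^sub>R x + s *\<^sub>R p \<in> interior (convex hull t)"
      by (simp add: interior_iff_bary_pos[OF assms(1)] bary_affine[OF assms(1)])
  qed
qed

lemma point_on_closed_segment: "0 \<le> s \<Longrightarrow> s \<le> 1 \<Longrightarrow> (1 - s) *\<^sub>R x + s *\<^sub>R p \<in> closed_segment p x"
  unfolding closed_segment_def by (auto intro: exI[of _ "1 - s"] simp: add.commute)

lemma invisible_iff_bary_pos:
  assumes "is_tetrahedron t" "k \<in> elements_of t"
  shows "invisible p k t \<longleftrightarrow> (\<forall>w\<in>t - k. bary t p w > 0)"
proof
  have t: "full_simplex t" and k: "k \<subseteq> t" "k \<noteq> {}"
    using tetrahedron_full_simplex assms unfolding elements_of_def by auto
  show "invisible p k t \<Longrightarrow> \<forall>w\<in>t - k. bary t p w > 0"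
    using segment_meets_interior_imp_bary_pos[OF t k(1)] unfolding invisible_def by blast
  assume pos: "\<forall>w\<in>t - k. bary t p w > 0"
  obtain x where x: "x \<in> rel_interior (convex hull k)"
    using k(2) rel_interior_eq_empty[of "convex hull k"] by auto
  have "\<forall>\<^sub>F s in at_right 0. s \<in> {0<..<1} \<and> (1 - s) *\<^sub>R x + s *\<^sub>R p \<in> interior (convex hull t)"
    using eventually_conj[OF eventually_at_right_real eventually_segment_in_interior[OF t k(1) x pos]]
    by simp
  then obtain s where "s \<in> {0<..<1}" "(1 - s) *\<^sub>R x + s *\<^sub>R p \<in> interior (convex hull t)"
    using eventually_happens'[OF trivial_limit_at_right_real] by blast
  then show "invisible p k t" using x point_on_closed_segment[of s x p] unfolding invisible_def by auto
qed

section \<open>Properties of meshes\<close>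

lemma tet_mesh_tetrahedron: "tet_mesh M \<Longrightarrow> t \<in> M \<Longrightarrow> is_tetrahedron t"
  unfolding tet_mesh_def by blast

lemma tet_mesh_full_simplex: "tet_mesh M \<Longrightarrow> t \<in> M \<Longrightarrow> full_simplex t"
  using tet_mesh_tetrahedron tetrahedron_full_simplex by blast

lemma generic_point_bary_nonzero:
  assumes "tet_mesh M" "t \<in> M" "w \<in> t"
    and "\<forall>f\<in>faces_of_mesh M. \<not> coplanar (insert p f)"
  shows "bary t p w \<noteq> 0"
proof
  assume "bary t p w = 0"
  then have p: "p \<in> affine hull (t - {w})"
    using bary_zero_imp_affine_hull_facet tet_mesh_full_simplex assms(1-3) by blast
  have "card (t - {w}) = 3" using assms(1-3) unfolding tet_mesh_def is_tetrahedron_def by auto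
  then have facet: "t - {w} \<in> faces_of_mesh M"
    using assms(2) unfolding faces_of_mesh_def skeleton_def elements_of_def by auto
  obtain a b c where "t - {w} = {a, b, c}" using \<open>card (t - {w}) = 3\<close> card_3_iff by metis
  then have "coplanar (affine hull (t - {w}))" by (simp add: coplanar_affine_hull_coplanar coplanar_3)
  then have "coplanar (insert p (t - {w}))"
    using p hull_subset coplanar_subset by (metis insert_subset)
  then show False using assms(4) facet by blast
qed

lemma face_to_face_interiors_meet_imp_eq:
  fixes t1 t2 :: "'a::euclidean_space set"
  assumes "full_simplex t1" "full_simplex t2"
    and "convex hull t1 \<inter> convex hull t2 = convex hull (t1 \<inter> t2)"
    and "interior (convex hull t1) \<inter> interior (convex hull t2) \<noteq> {}"
  shows "t1 = t2"
proof -
  have fin: "finite t1" "finite t2" using assms(1,2) full_simplex_finite by auto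
  have "interior (convex hull (t1 \<inter> t2)) \<noteq> {}" using assms(3,4) interior_Int by metis
  then have big: "card (t1 \<inter> t2) > DIM('a)"
    using empty_interior_convex_hull[of "t1 \<inter> t2"] fin by (meson finite_Int not_less)
  have "card (t1 \<inter> t2) = card t1"
    using big card_mono[OF fin(1), of "t1 \<inter> t2"] full_simplex_card[OF assms(1)] by auto
  then have "t1 \<inter> t2 = t1" using card_subset_eq[OF fin(1)] by blast
  moreover have "card (t1 \<inter> t2) = card t2"
    using big card_mono[OF fin(2), of "t1 \<inter> t2"] full_simplex_card[OF assms(2)] by auto
  then have "t1 \<inter> t2 = t2" using card_subset_eq[OF fin(2)] by blast
  ultimately show "t1 = t2" by simp
qed

lemma eventually_closed_sets_contain_limit:
  assumes "finite \<F>" "\<forall>S\<in>\<F>. closed S" "(f \<longlongrightarrow> x) F"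
  shows "\<forall>\<^sub>F s in F. \<forall>S\<in>\<F>. f s \<in> S \<longrightarrow> x \<in> S"
proof -
  have "\<forall>\<^sub>F s in F. f s \<in> S \<longrightarrow> x \<in> S" if "S \<in> \<F>" for S
  proof (cases "x \<in> S")
    case False
    have "open (- S)" using assms(2) that by (simp add: open_Compl)
    then have "\<forall>\<^sub>F s in F. f s \<in> - S" using topological_tendstoD[OF assms(3)] False by blast
    then show ?thesis by (rule eventually_mono) simp
  qed simp
  then have "\<forall>S\<in>\<F>. \<forall>\<^sub>F s in F. f s \<in> S \<longrightarrow> x \<in> S" by blast
  then show ?thesis by (rule eventually_ball_finite[OF assms(1)])
qed

lemma exists_tetrahedron_facing_point:
  assumes M: "convex_tet_mesh M" and t0: "t0 \<in> M" "k \<subseteq> t0"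
    and x: "x \<in> rel_interior (convex hull k)"
    and p: "p \<in> (\<Union>t\<in>M. convex hull t)"
  shows "\<exists>t\<in>M. k \<subseteq> t \<and> (\<forall>w\<in>t - k. bary t p w \<ge> 0)"
proof -
  have mesh: "tet_mesh M" and cvx: "convex (\<Union>t\<in>M. convex hull t)"
    using M unfolding convex_tet_mesh_def by auto
  have fin: "finite M" using mesh unfolding tet_mesh_def by blast
  have full: "\<And>t. t \<in> M \<Longrightarrow> full_simplex t" using tet_mesh_full_simplex[OF mesh] .
  let ?y = "\<lambda>s. (1 - s) *\<^sub>R x + s *\<^sub>R p"
  let ?cells = "(\<lambda>t. convex hull t) ` M"
  have "(?y \<longlongrightarrow> (1 - 0) *\<^sub>R x + 0 *\<^sub>R p) (at_right 0)" by (intro tendsto_intros)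
  then have lim: "(?y \<longlongrightarrow> x) (at_right 0)" by simp
  have closed: "\<forall>S\<in>?cells. closed S"
    using full by (auto intro!: compact_imp_closed finite_imp_compact_convex_hull full_simplex_finite)
  have "\<forall>\<^sub>F s in at_right 0. \<forall>S\<in>?cells. ?y s \<in> S \<longrightarrow> x \<in> S"
    using fin closed lim by (intro eventually_closed_sets_contain_limit) simp_all
  then have "\<forall>\<^sub>F s in at_right 0. s \<in> {0<..<1} \<and> (\<forall>S\<in>?cells. ?y s \<in> S \<longrightarrow> x \<in> S)"
    using eventually_at_right_real[of 0 1] by (simp add: eventually_conj_iff)
  from eventually_happens'[OF trivial_limit_at_right_real this]
  obtain s where "s \<in> {0<..<1}" and near: "\<forall>S\<in>?cells. ?y s \<in> S \<longrightarrow> x \<in> S" by blast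
  then have s: "0 < s" "s < 1" by auto
  have "x \<in> convex hull t0" using x t0(2) rel_interior_subset hull_mono by blast
  then have "?y s \<in> (\<Union>t\<in>M. convex hull t)" using cvx p t0(1) s by (intro convexD) auto
  then obtain t where t: "t \<in> M" "?y s \<in> convex hull t" by blast
  then have "x \<in> convex hull (t \<inter> t0)"
    using near t t0(1) \<open>x \<in> convex hull t0\<close> mesh unfolding tet_mesh_def by blast
  then have kt: "k \<subseteq> t"
    using rel_interior_element_in_hull_subset[OF full[OF t0(1)] t0(2) x] by blast
  have "bary t p w \<ge> 0" if w: "w \<in> t - k" for w
  proof -
    have "(1 - s) * bary t x w + s * bary t p w \<ge> 0"
      using t(2) convex_hull_iff_bary_nonneg[OF full[OF t(1)]] bary_affine[OF full[OF t(1)]] w by auto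
    moreover have "bary t x w = 0" using rel_interior_element_bary(2)[OF full[OF t(1)] kt x] w by blast
    ultimately show ?thesis using s(1) by (simp add: zero_le_mult_iff)
  qed
  then show ?thesis using t(1) kt by blast
qed

section \<open>Existence and uniqueness of the invisible tetrahedron\<close>

lemma invisible_tetrahedron_exists:
  assumes M: "convex_tet_mesh M" and t0: "t0 \<in> M" "k \<in> elements_of t0"
    and p: "p \<in> (\<Union>t\<in>M. convex hull t)"
    and generic: "\<forall>f\<in>faces_of_mesh M. \<not> coplanar (insert p f)"
  shows "\<exists>t. t \<in> M \<and> k \<in> elements_of t \<and> invisible p k t"
proof -
  have mesh: "tet_mesh M" using M unfolding convex_tet_mesh_def by blast
  have k: "k \<subseteq> t0" "k \<noteq> {}" using t0(2) unfolding elements_of_def by auto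
  then obtain x where x: "x \<in> rel_interior (convex hull k)"
    using rel_interior_eq_empty[of "convex hull k"] by auto
  obtain t where t: "t \<in> M" "k \<subseteq> t" "\<forall>w\<in>t - k. bary t p w \<ge> 0"
    using exists_tetrahedron_facing_point[OF M t0(1) k(1) x p] by blast
  then have "\<forall>w\<in>t - k. bary t p w > 0"
    using generic_point_bary_nonzero[OF mesh t(1) _ generic] by (simp add: order_less_le)
  moreover have "k \<in> elements_of t" using t0(2) t(2) unfolding elements_of_def by auto
  ultimately show ?thesis
    using invisible_iff_bary_pos[OF tet_mesh_tetrahedron[OF mesh t(1)]] t(1) by blast
qed

text \<open>An element of a mesh is invisible from p with respect to at most one tetrahedron:
  segment points near the element would lie in the interiors of both.\<close>
lemma invisible_tetrahedron_unique:
  assumes mesh: "tet_mesh M"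
    and t1: "t1 \<in> M" "k \<in> elements_of t1" "invisible p k t1"
    and t2: "t2 \<in> M" "k \<in> elements_of t2" "invisible p k t2"
  shows "t1 = t2"
proof -
  have "k \<noteq> {}" using t1(2) unfolding elements_of_def by auto
  then obtain x where x: "x \<in> rel_interior (convex hull k)"
    using rel_interior_eq_empty[of "convex hull k"] by auto
  have near: "\<forall>\<^sub>F s in at_right 0. (1 - s) *\<^sub>R x + s *\<^sub>R p \<in> interior (convex hull t)"
    if t: "t \<in> M" "k \<in> elements_of t" "invisible p k t" for t
  proof -
    have "k \<subseteq> t" using t(2) unfolding elements_of_def by blast
    moreover have "\<forall>w\<in>t - k. bary t p w > 0"
      using invisible_iff_bary_pos[OF tet_mesh_tetrahedron[OF mesh t(1)] t(2)] t(3) by blast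
    ultimately show ?thesis
      using eventually_segment_in_interior[OF tet_mesh_full_simplex[OF mesh t(1)] _ x] by blast
  qed
  from eventually_happens'[OF trivial_limit_at_right_real eventually_conj[OF near[OF t1] near[OF t2]]]
  have "interior (convex hull t1) \<inter> interior (convex hull t2) \<noteq> {}" by blast
  moreover have "convex hull t1 \<inter> convex hull t2 = convex hull (t1 \<inter> t2)"
    using mesh t1(1) t2(1) unfolding tet_mesh_def by blast
  ultimately show "t1 = t2"
    using face_to_face_interiors_meet_imp_eq tet_mesh_full_simplex[OF mesh] t1(1) t2(1) by blast
qed

theorem mainTheorem9:
  fixes M :: "point set set" and ts :: "point set" and ps :: point
  assumes "convex_tet_mesh M"
    and "ts \<in> M"
    and "ps \<in> interior (convex hull ts)"
    and "\<forall>e\<in>edges_of_mesh M. \<not> collinear (insert ps e)"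
    and "\<forall>f\<in>faces_of_mesh M. \<not> coplanar (insert ps f)"
  shows "\<forall>k\<in>skeleton M. \<exists>!t. t \<in> M \<and> k \<in> elements_of t \<and> invisible ps k t"
proof
  fix k assume "k \<in> skeleton M"
  then obtain t0 where t0: "t0 \<in> M" "k \<in> elements_of t0" unfolding skeleton_def by auto
  have mesh: "tet_mesh M" using assms(1) unfolding convex_tet_mesh_def by blast
  have ps: "ps \<in> (\<Union>t\<in>M. convex hull t)" using assms(2,3) interior_subset by blast
  show "\<exists>!t. t \<in> M \<and> k \<in> elements_of t \<and> invisible ps k t"
  proof (rule ex_ex1I)
    show "\<exists>t. t \<in> M \<and> k \<in> elements_of t \<and> invisible ps k t"
      using invisible_tetrahedron_exists[OF assms(1) t0 ps assms(5)] .
    show "t1 = t2" if "t1 \<in> M \<and> k \<in> elements_of t1 \<and> invisible ps k t1"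
      and "t2 \<in> M \<and> k \<in> elements_of t2 \<and> invisible ps k t2" for t1 t2
      using invisible_tetrahedron_unique[OF mesh] that by blast
  qed
qed

end
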